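(* Let $G$ be a finite group (written additively) of odd order, and let $S\subseteq G$ be a subset such that $S\cap -S=\emptyset$ and $|S|\ge 3$. Then $|\sum(S)|\ge 2|S|$.
   Context: $-S=\{-s: s\in S\}$. For a subset $S=\{a_1,\dots,a_k\}$ of $G$, $\sum(S)$ denotes the set of all elements $a_{i_1}+\cdots+a_{i_l}$ with $1\le l\le k$ and $i_1,\dots,i_l$ pairwise distinct indices (in any order). *)

theory Defs
  imports Main
begin

definition subset_sums :: "'a::group_add set \<Rightarrow> 'a set" where
  "subset_sums S = {sum_list xs | xs. xs \<noteq> [] \<and> distinct xs \<and> set xs \<subseteq> S}"

end

theory Submission
  imports Defs
begin

text \<open>Let \<open>Y = \<Sigma>(S)\<close> and \<open>D = S \<union> -S\<close>, so \<open>|D| = 2|S|\<close> and \<open>0 \<notin> D\<close>.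
  For \<open>a \<in> S\<close>, every \<open>y \<in> \<Sigma>(S - {a}) + a\<close> satisfies \<open>y, y - a \<in> Y\<close>, and every
  \<open>y \<in> \<Sigma>(S - {a})\<close> satisfies \<open>y, y + a \<in> Y\<close>; so by induction each \<open>x \<in> D\<close> has at least
  \<open>2|S| - 2\<close> elements \<open>y \<in> Y\<close> with \<open>y - x \<in> Y\<close>. Conversely, for fixed \<open>y \<in> Y\<close> the
  differences \<open>y - x\<close> with \<open>x \<in> D\<close> are distinct elements of \<open>Y - {y}\<close>. Counting these pairs
  gives \<open>2|S| (2|S| - 2) \<le> |Y| (|Y| - 1)\<close>, which forces \<open>|Y| \<ge> 2|S|\<close>. The base case
  \<open>|S| = 3\<close> is an inspection of the sums of subsets of \<open>{a, b, c}\<close>.\<close>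

lemma mem_subset_sums_iff:
  "x \<in> subset_sums S \<longleftrightarrow> (\<exists>xs. x = sum_list xs \<and> xs \<noteq> [] \<and> distinct xs \<and> set xs \<subseteq> S)"
  unfolding subset_sums_def by blast

lemma sum_list_in_subset_sums:
  "xs \<noteq> [] \<Longrightarrow> distinct xs \<Longrightarrow> set xs \<subseteq> S \<Longrightarrow> sum_list xs \<in> subset_sums S"
  unfolding mem_subset_sums_iff by blast

lemma subset_sums_mono: "T \<subseteq> S \<Longrightarrow> subset_sums T \<subseteq> subset_sums S"
  unfolding subset_sums_def by blast

lemma subset_subset_sums: "S \<subseteq> subset_sums S"
  using sum_list_in_subset_sums[of "[_]"] by auto

lemma finite_subset_sums:
  assumes "finite S"
  shows "finite (subset_sums S)"
proof -
  have "subset_sums S \<subseteq> sum_list ` {xs. set xs \<subseteq> S \<and> distinct xs}"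
    unfolding subset_sums_def by blast
  then show ?thesis
    using finite_subset_distinct[OF assms] by (metis finite_surj)
qed

lemma subset_sums_add_right:
  assumes "y \<in> subset_sums (S - {a})" and "a \<in> S"
  shows "y + a \<in> subset_sums S"
proof -
  obtain xs where xs: "y = sum_list xs" "xs \<noteq> []" "distinct xs" "set xs \<subseteq> S - {a}"
    using assms(1) unfolding mem_subset_sums_iff by blast
  have "sum_list (xs @ [a]) \<in> subset_sums S"
    by (rule sum_list_in_subset_sums) (use xs assms(2) in auto)
  then show ?thesis
    using xs(1) by simp
qed

lemma sum_card_shifts_le:
  fixes Y D :: "'a::group_add set"
  assumes "finite Y" and "finite D" and "0 \<notin> D"
  shows "(\<Sum>x\<in>D. card {y\<in>Y. y - x \<in> Y}) \<le> card Y * (card Y - 1)"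
proof -
  have count: "card {z\<in>Z. P z} = (\<Sum>z\<in>Z. of_bool (P z))" if "finite Z" for Z and P :: "'a \<Rightarrow> bool"
    using that by (simp add: Int_def)
  have "(\<Sum>x\<in>D. card {y\<in>Y. y - x \<in> Y}) = (\<Sum>x\<in>D. \<Sum>y\<in>Y. of_bool (y - x \<in> Y))"
    using assms(1) by (simp only: count)
  also have "\<dots> = (\<Sum>y\<in>Y. \<Sum>x\<in>D. of_bool (y - x \<in> Y))"
    by (rule sum.swap)
  also have "\<dots> = (\<Sum>y\<in>Y. card {x\<in>D. y - x \<in> Y})"
    using assms(2) by (simp only: count)
  also have "\<dots> \<le> (\<Sum>y\<in>Y. card Y - 1)"
  proof (rule sum_mono)
    fix y assume "y \<in> Y"
    have "card {x\<in>D. y - x \<in> Y} \<le> card (Y - {y})"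
    proof (rule card_inj_on_le[where f = "\<lambda>x. y - x"])
      show "inj_on (\<lambda>x. y - x) {x\<in>D. y - x \<in> Y}"
        by (auto intro: inj_onI dest: diff_left_imp_eq)
      show "(\<lambda>x. y - x) ` {x\<in>D. y - x \<in> Y} \<subseteq> Y - {y}"
        using assms(3) by clarsimp (metis diff_0_right diff_left_imp_eq)
    qed (use assms(1) in simp)
    then show "card {x\<in>D. y - x \<in> Y} \<le> card Y - 1"
      using \<open>y \<in> Y\<close> by simp
  qed
  finally show ?thesis
    by simp
qed

lemma le_of_mult_pred_le:
  fixes m n :: nat
  assumes "n * (n - 2) \<le> m * (m - 1)" and "2 < n"
  shows "n \<le> m"
proof (rule ccontr)
  assume "\<not> n \<le> m"
  then have "m * (m - 1) \<le> (n - 1) * (n - 2)"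
    by (intro mult_le_mono) auto
  also have "\<dots> < n * (n - 2)"
    using assms(2) by simp
  finally show False
    using assms(1) by simp
qed

lemma card_subset_sums_Diff_le_card_shifts:
  assumes "finite S" and "a \<in> S" and "x \<in> {a, - a}"
  shows "card (subset_sums (S - {a})) \<le> card {y \<in> subset_sums S. y - x \<in> subset_sums S}"
proof -
  let ?Y = "subset_sums S"
  have fin: "finite {y \<in> ?Y. y - x \<in> ?Y}"
    using finite_subset_sums[OF assms(1)] by simp
  have sub: "subset_sums (S - {a}) \<subseteq> ?Y"
    by (rule subset_sums_mono) blast
  show ?thesis
  proof (cases "x = a")
    case True
    have "(\<lambda>z. z + a) ` subset_sums (S - {a}) \<subseteq> {y \<in> ?Y. y - x \<in> ?Y}"
      using True sub subset_sums_add_right[OF _ assms(2)] by auto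
    from card_mono[OF fin this] show ?thesis
      by (simp add: card_image)
  next
    case False
    then have "subset_sums (S - {a}) \<subseteq> {y \<in> ?Y. y - x \<in> ?Y}"
      using assms(3) sub subset_sums_add_right[OF _ assms(2)] by auto
    from card_mono[OF fin this] show ?thesis .
  qed
qed

lemma card_subset_sums_step:
  fixes S :: "'a::group_add set"
  assumes "finite S" and "S \<inter> uminus ` S = {}" and "2 \<le> card S"
    and IH: "\<And>a. a \<in> S \<Longrightarrow> 2 * card (S - {a}) \<le> card (subset_sums (S - {a}))"
  shows "2 * card S \<le> card (subset_sums S)"
proof -
  let ?Y = "subset_sums S" and ?D = "S \<union> uminus ` S"
  have card_D: "card ?D = 2 * card S"
    using assms(1,2) by (simp add: card_Un_disjoint card_image)
  have "0 \<notin> ?D"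
    using assms(2) by force
  have "2 * (card S - 1) \<le> card {y \<in> ?Y. y - x \<in> ?Y}" if "x \<in> ?D" for x
  proof -
    obtain a where a: "a \<in> S" and x: "x \<in> {a, - a}"
      using \<open>x \<in> ?D\<close> by auto
    have "2 * (card S - 1) = 2 * card (S - {a})"
      using a assms(1) by simp
    also have "\<dots> \<le> card (subset_sums (S - {a}))"
      using IH[OF a] .
    also have "\<dots> \<le> card {y \<in> ?Y. y - x \<in> ?Y}"
      using card_subset_sums_Diff_le_card_shifts[OF assms(1) a x] .
    finally show ?thesis .
  qed
  then have "card ?D * (2 * (card S - 1)) \<le> (\<Sum>x\<in>?D. card {y \<in> ?Y. y - x \<in> ?Y})"
    using sum_bounded_below[of ?D "2 * (card S - 1)"] by simp
  also have "\<dots> \<le> card ?Y * (card ?Y - 1)"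
    using finite_subset_sums[OF assms(1)] assms(1) \<open>0 \<notin> ?D\<close> by (intro sum_card_shifts_le) auto
  finally have "2 * card S * (2 * card S - 2) \<le> card ?Y * (card ?Y - 1)"
    by (simp add: card_D right_diff_distrib')
  then show ?thesis
    by (rule le_of_mult_pred_le) (use assms(3) in simp)
qed

text \<open>Of the seven sums \<open>a, b, c, a + b, a + c, b + c, a + b + c\<close> only the five coincidences
  \<open>a + b = c\<close>, \<open>a + c = b\<close>, \<open>b + c = a\<close>, \<open>a + b = b + c\<close>, \<open>a + b + c = b\<close> can occur, and no two
  of them hold together except the pair excluded by hypothesis; so dropping one sum
  leaves six distinct ones.\<close>
lemma card_subset_sums_three:
  fixes a b c :: "'a::group_add"
  assumes no_zero_sum: "\<And>x y. x \<in> {a, b, c} \<Longrightarrow> y \<in> {a, b, c} \<Longrightarrow> x + y \<noteq> 0"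
    and "distinct [a, b, c]"
    and "\<not> (a + b = c \<and> b + c = a)"
  shows "6 \<le> card (subset_sums {a, b, c})"
proof -
  let ?u = "a + b + c"
  have "a + a \<noteq> 0" "c + c \<noteq> 0" "a + b \<noteq> 0" "a + c \<noteq> 0" "b + c \<noteq> 0"
    using no_zero_sum by auto
  moreover have "a \<noteq> 0" "b \<noteq> 0" "c \<noteq> 0"
    using no_zero_sum by force+
  ultimately have ne: "a + b \<noteq> a" "a + b \<noteq> b" "a + c \<noteq> a" "a + c \<noteq> c" "b + c \<noteq> b" "b + c \<noteq> c"
      "?u \<noteq> a" "?u \<noteq> c" "?u \<noteq> a + b" "?u \<noteq> a + c" "?u \<noteq> b + c"
    and exclusive: "a + b = c \<Longrightarrow> a + c \<noteq> b" "a + b = c \<Longrightarrow> a + b \<noteq> b + c"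
      "a + b = c \<Longrightarrow> ?u \<noteq> b" "a + c = b \<Longrightarrow> b + c \<noteq> a" "a + c = b \<Longrightarrow> a + b \<noteq> b + c"
      "a + c = b \<Longrightarrow> ?u \<noteq> b" "b + c = a \<Longrightarrow> ?u \<noteq> b" "a + b = b + c \<Longrightarrow> ?u \<noteq> b"
    using \<open>distinct [a, b, c]\<close>
    by (metis add.assoc add.right_neutral add.left_neutral add_left_cancel add_right_cancel distinct_length_2_or_more)+
  let ?candidates = "{[a, b, c, a + b, a + c, b + c], [a, b, c, a + b, b + c, ?u],
      [a, b, c, a + c, b + c, ?u], [a, b, c, a + b, a + c, ?u]}"
  have "\<exists>L \<in> ?candidates. distinct L"
    using assms(2,3) ne exclusive by auto
  then obtain L where L: "L \<in> ?candidates" and "distinct L"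
    by blast
  have "{a, b, c, a + b, a + c, b + c, ?u} \<subseteq> subset_sums {a, b, c}"
    using assms(2) sum_list_in_subset_sums[of "[a, b]"] sum_list_in_subset_sums[of "[a, c]"]
      sum_list_in_subset_sums[of "[b, c]"] sum_list_in_subset_sums[of "[a, b, c]"]
      subset_subset_sums[of "{a, b, c}"]
    by (auto simp: add.assoc)
  with L have "card (set L) \<le> card (subset_sums {a, b, c})"
    by (intro card_mono) (auto intro: finite_subset_sums)
  moreover have "card (set L) = 6"
    using L distinct_card[OF \<open>distinct L\<close>] by auto
  ultimately show ?thesis
    by simp
qed

lemma card_subset_sums_card_3:
  fixes S :: "'a::group_add set"
  assumes "card S = 3" and "S \<inter> uminus ` S = {}"
  shows "6 \<le> card (subset_sums S)"
proof -
  obtain a b c where S: "S = {a, b, c}" and abc: "distinct [a, b, c]"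
    using assms(1) by (auto simp: card_3_iff)
  have no_zero_sum: "x + y \<noteq> 0" if "x \<in> S" and "y \<in> S" for x y
    using that assms(2) by (auto simp: add_eq_0_iff)
  show ?thesis
  proof (cases "a + b = c \<and> b + c = a")
    case False
    then show ?thesis
      using card_subset_sums_three[of a b c] abc no_zero_sum unfolding S by blast
  next
    case True
    have "c + c \<noteq> 0"
      using no_zero_sum S by blast
    with True have "\<not> (b + a = c \<and> a + c = b)"
      by (metis add.assoc add.right_neutral add_left_cancel)
    moreover have "{b, a, c} = S"
      using S by blast
    ultimately show ?thesis
      using card_subset_sums_three[of b a c] abc no_zero_sum by auto
  qed
qed

lemma card_subset_sums_ge:
  fixes S :: "'a::group_add set"
  assumes "finite S" and "3 \<le> card S" and "S \<inter> uminus ` S = {}"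
  shows "2 * card S \<le> card (subset_sums S)"
  using assms(2,1,3)
proof (induction "card S" arbitrary: S rule: nat_induct_at_least)
  case base
  then show ?case
    using card_subset_sums_card_3 by fastforce
next
  case (Suc n)
  show ?case
  proof (rule card_subset_sums_step)
    fix a assume "a \<in> S"
    then have "card (S - {a}) = n" and "(S - {a}) \<inter> uminus ` (S - {a}) = {}"
      using Suc.hyps(3) Suc.prems by auto
    then show "2 * card (S - {a}) \<le> card (subset_sums (S - {a}))"
      using Suc.hyps(2) Suc.prems(1) by blast
  qed (use Suc in auto)
qed

theorem lemma2p4:
  fixes S :: "('a::{group_add, finite}) set"
  assumes "odd (card (UNIV :: 'a set))"
    and "S \<inter> uminus ` S = {}"
    and "card S \<ge> 3"
  shows "card (subset_sums S) \<ge> 2 * card S"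
  using card_subset_sums_ge[of S] assms(2,3) by simp

end
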